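(* Let $d\ge2$ and for real $\eta,\beta$ let $\rho(\eta,\beta)=(1-\eta-\beta)\frac{\mathbb{I}}{d^2}+\eta\frac{V}{d}+\beta\frac{V^{T_A}}{d}$ on $\mathbb{C}^d\otimes\mathbb{C}^d$. Then $\rho(\eta,\beta)$ is local-positive if and only if $$-\frac{1}{d-1}\le\eta+\beta\le1,\qquad -(d-1)\eta+\beta\le1,\qquad \eta-(d-1)\beta\le1.$$
   Context: $V=\sum_{i,j}|ij\rangle\langle ji|$ is the swap operator and $V^{T_A}=\sum_{i,j}|ii\rangle\langle jj|$ its partial transpose on the first factor in a fixed orthonormal basis. An operator $M$ on $\mathcal{H}_A\otimes\mathcal{H}_B$ is local-positive if $\operatorname{Tr}(M\,P_A\otimes P_B)\ge0$ for all rank-one projectors $P_A$ on $\mathcal{H}_A$ and $P_B$ on $\mathcal{H}_B$. *)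

theory Defs
  imports Complex_Main "HOL-Library.Complex_Order"
begin

text \<open>Operators on C^d (x) C^d are represented by their matrix entries in the
  product basis |i j>, indices i, j < d:  M (i,j) (k,l) = <i j| M |k l>.
  Operators on C^d are matrices nat => nat => complex with indices < d.\<close>

type_synonym op2 = "nat \<times> nat \<Rightarrow> nat \<times> nat \<Rightarrow> complex"

definition ident2 :: op2 where
  "ident2 r s = (if r = s then 1 else 0)"

definition swap_op :: op2 where
  "swap_op = (\<lambda>(a,b) (c,e). if a = e \<and> b = c then 1 else 0)"

definition ptA :: "op2 \<Rightarrow> op2" where
  "ptA M = (\<lambda>(a,b) (c,e). M (c,b) (a,e))"

definition tensor :: "(nat \<Rightarrow> nat \<Rightarrow> complex) \<Rightarrow> (nat \<Rightarrow> nat \<Rightarrow> complex) \<Rightarrow> op2" where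
  "tensor P Q = (\<lambda>(a,b) (c,e). P a c * Q b e)"

definition tr_prod :: "nat \<Rightarrow> op2 \<Rightarrow> op2 \<Rightarrow> complex" where
  "tr_prod d M N = (\<Sum>r\<in>{..<d}\<times>{..<d}. \<Sum>s\<in>{..<d}\<times>{..<d}. M r s * N s r)"

definition rank_one_proj :: "nat \<Rightarrow> (nat \<Rightarrow> nat \<Rightarrow> complex) \<Rightarrow> bool" where
  "rank_one_proj d P \<longleftrightarrow> (\<exists>\<psi> :: nat \<Rightarrow> complex.
      (\<Sum>i<d. (cmod (\<psi> i))\<^sup>2) = 1 \<and>
      (\<forall>i<d. \<forall>j<d. P i j = \<psi> i * cnj (\<psi> j)))"

definition local_positive :: "nat \<Rightarrow> op2 \<Rightarrow> bool" where
  "local_positive d M \<longleftrightarrow> (\<forall>PA PB. rank_one_proj d PA \<longrightarrow> rank_one_proj d PB \<longrightarrow>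
      0 \<le> tr_prod d M (tensor PA PB))"

definition rho :: "nat \<Rightarrow> real \<Rightarrow> real \<Rightarrow> op2" where
  "rho d \<eta> \<beta> = (\<lambda>r s.
      complex_of_real ((1 - \<eta> - \<beta>) / (real d)\<^sup>2) * ident2 r s
    + complex_of_real (\<eta> / real d) * swap_op r s
    + complex_of_real (\<beta> / real d) * ptA swap_op r s)"

end

theory Submission
  imports Defs
begin

text \<open>
  For unit vectors \<psi>, \<phi> and the rank-one projectors P = |\<psi>><\<psi>|,
  Q = |\<phi>><\<phi>| the three building blocks of rho evaluate to
    Tr(I (P\<otimes>Q)) = 1,   Tr(V (P\<otimes>Q)) = |<\<psi>,\<phi>>|^2,   Tr(V^{T_A} (P\<otimes>Q)) = |\<Sum>\<psi>_a \<phi>_a|^2,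
  so d^2 Tr(rho (P\<otimes>Q)) = G x y with the affine function
  G x y = 1 - \<eta> - \<beta> + d \<eta> x + d \<beta> y evaluated at the pair of overlaps (x, y).
  The overlaps always lie in the unit square [0,1]^2, and for d \<ge> 2 all four
  corners are attained, by pairs among e0, e1, circ = (e0 + i e1)/sqrt 2 and its
  complex conjugate.
  An affine function is nonnegative on the square iff it is nonnegative at the
  corners, and the four corner conditions are exactly the four inequalities.
\<close>

lemma tr_prod_expand:
  "tr_prod d M N = (\<Sum>a<d. \<Sum>b<d. \<Sum>c<d. \<Sum>e<d. M (a,b) (c,e) * N (c,e) (a,b))"
proof -
  have split: "(\<Sum>r\<in>A\<times>B. h r) = (\<Sum>a\<in>A. \<Sum>b\<in>B. h (a,b))" for A B and h :: "_ \<Rightarrow> complex"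
    by (simp add: sum.cartesian_product)
  show ?thesis unfolding tr_prod_def split by simp
qed

lemma indicator_conj_mult:
  "(if A \<and> B then 1 else 0) * (X::complex) = (if A then if B then X else 0 else 0)"
  "(if A \<and> B then 1 else 0) * (X::complex) = (if B then if A then X else 0 else 0)"
  by simp_all

lemma tr_prod_linear:
  "tr_prod d (\<lambda>r s. x * A r s + y * B r s + z * C r s) N
   = x * tr_prod d A N + y * tr_prod d B N + z * tr_prod d C N"
  unfolding tr_prod_def by (simp add: algebra_simps sum.distrib sum_distrib_left)

lemma tr_prod_ident_tensor:
  "tr_prod d ident2 (tensor P Q) = (\<Sum>a<d. P a a) * (\<Sum>b<d. Q b b)"
  unfolding tr_prod_expand ident2_def tensor_def
  by (simp add: sum_product indicator_conj_mult(2))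

lemma tr_prod_swap_tensor:
  "tr_prod d swap_op (tensor P Q) = (\<Sum>a<d. \<Sum>b<d. P b a * Q a b)"
  unfolding tr_prod_expand swap_op_def tensor_def by (simp add: indicator_conj_mult(1))

lemma tr_prod_ptA_swap_tensor:
  "tr_prod d (ptA swap_op) (tensor P Q) = (\<Sum>a<d. \<Sum>c<d. P c a * Q c a)"
  unfolding tr_prod_expand swap_op_def ptA_def tensor_def
  by (simp add: indicator_conj_mult(1)) (subst sum.swap, simp)

definition unit_vector :: "nat \<Rightarrow> (nat \<Rightarrow> complex) \<Rightarrow> bool" where
  "unit_vector d \<psi> \<longleftrightarrow> (\<Sum>i<d. (cmod (\<psi> i))\<^sup>2) = 1"

definition herm_overlap :: "nat \<Rightarrow> (nat \<Rightarrow> complex) \<Rightarrow> (nat \<Rightarrow> complex) \<Rightarrow> real" where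
  "herm_overlap d \<psi> \<phi> = (cmod (\<Sum>a<d. cnj (\<psi> a) * \<phi> a))\<^sup>2"

definition bilin_overlap :: "nat \<Rightarrow> (nat \<Rightarrow> complex) \<Rightarrow> (nat \<Rightarrow> complex) \<Rightarrow> real" where
  "bilin_overlap d \<psi> \<phi> = (cmod (\<Sum>a<d. \<psi> a * \<phi> a))\<^sup>2"

text \<open>d^2 times the expectation value of rho in a product state with overlaps x, y.\<close>
definition rho_form :: "nat \<Rightarrow> real \<Rightarrow> real \<Rightarrow> real \<Rightarrow> real \<Rightarrow> real" where
  "rho_form d \<eta> \<beta> x y = 1 - \<eta> - \<beta> + real d * \<eta> * x + real d * \<beta> * y"

lemma mult_cnj_eq_norm_sq: "z * cnj z = complex_of_real ((cmod z)\<^sup>2)"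
  by (metis complex_norm_square)

lemma trace_rank_one:
  assumes "\<forall>i<d. \<forall>j<d. P i j = \<psi> i * cnj (\<psi> j)" and "unit_vector d \<psi>"
  shows "(\<Sum>a<d. P a a) = 1"
proof -
  have "(\<Sum>a<d. P a a) = (\<Sum>a<d. complex_of_real ((cmod (\<psi> a))\<^sup>2))"
    using assms(1) by (intro sum.cong) (auto simp: mult_cnj_eq_norm_sq)
  also have "\<dots> = 1"
    using assms(2) unfolding unit_vector_def by (metis of_real_sum of_real_1)
  finally show ?thesis .
qed

lemma tr_prod_rho_product_state:
  assumes P: "\<forall>i<d. \<forall>j<d. P i j = \<psi> i * cnj (\<psi> j)" and u\<psi>: "unit_vector d \<psi>"
    and Q: "\<forall>i<d. \<forall>j<d. Q i j = \<phi> i * cnj (\<phi> j)" and u\<phi>: "unit_vector d \<phi>"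
    and d: "d > 0"
  shows "tr_prod d (rho d \<eta> \<beta>) (tensor P Q)
    = complex_of_real (rho_form d \<eta> \<beta> (herm_overlap d \<psi> \<phi>) (bilin_overlap d \<psi> \<phi>) / (real d)\<^sup>2)"
proof -
  have ident: "tr_prod d ident2 (tensor P Q) = 1"
    using trace_rank_one[OF P u\<psi>] trace_rank_one[OF Q u\<phi>] by (simp add: tr_prod_ident_tensor)
  have "tr_prod d swap_op (tensor P Q)
      = (\<Sum>a<d. \<Sum>b<d. (cnj (\<psi> a) * \<phi> a) * cnj (cnj (\<psi> b) * \<phi> b))"
    unfolding tr_prod_swap_tensor using P Q by (intro sum.cong) (auto simp: algebra_simps)
  also have "\<dots> = (\<Sum>a<d. cnj (\<psi> a) * \<phi> a) * cnj (\<Sum>a<d. cnj (\<psi> a) * \<phi> a)"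
    by (simp add: sum_product)
  finally have swap: "tr_prod d swap_op (tensor P Q) = complex_of_real (herm_overlap d \<psi> \<phi>)"
    unfolding herm_overlap_def mult_cnj_eq_norm_sq .
  have "tr_prod d (ptA swap_op) (tensor P Q) = (\<Sum>a<d. \<Sum>b<d. (\<psi> b * \<phi> b) * cnj (\<psi> a * \<phi> a))"
    unfolding tr_prod_ptA_swap_tensor using P Q by (intro sum.cong) (auto simp: algebra_simps)
  also have "\<dots> = (\<Sum>a<d. \<psi> a * \<phi> a) * cnj (\<Sum>a<d. \<psi> a * \<phi> a)"
    by (simp add: sum_product) (subst sum.swap, simp)
  finally have pswap: "tr_prod d (ptA swap_op) (tensor P Q) = complex_of_real (bilin_overlap d \<psi> \<phi>)"
    unfolding bilin_overlap_def mult_cnj_eq_norm_sq .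
  have "tr_prod d (rho d \<eta> \<beta>) (tensor P Q) = complex_of_real
      ((1 - \<eta> - \<beta>) / (real d)\<^sup>2 + \<eta> / real d * herm_overlap d \<psi> \<phi> + \<beta> / real d * bilin_overlap d \<psi> \<phi>)"
    unfolding rho_def tr_prod_linear ident swap pswap by simp
  also have "\<dots> = complex_of_real
      (rho_form d \<eta> \<beta> (herm_overlap d \<psi> \<phi>) (bilin_overlap d \<psi> \<phi>) / (real d)\<^sup>2)"
    using d unfolding rho_form_def by (simp add: field_simps power2_eq_square)
  finally show ?thesis .
qed

lemma local_positive_rho_iff:
  assumes d: "d > 0"
  shows "local_positive d (rho d \<eta> \<beta>) \<longleftrightarrow>
    (\<forall>\<psi> \<phi>. unit_vector d \<psi> \<longrightarrow> unit_vector d \<phi> \<longrightarrow>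
       0 \<le> rho_form d \<eta> \<beta> (herm_overlap d \<psi> \<phi>) (bilin_overlap d \<psi> \<phi>))"
proof -
  have value_nonneg_iff: "0 \<le> tr_prod d (rho d \<eta> \<beta>) (tensor P Q) \<longleftrightarrow>
      0 \<le> rho_form d \<eta> \<beta> (herm_overlap d \<psi> \<phi>) (bilin_overlap d \<psi> \<phi>)"
    if "\<forall>i<d. \<forall>j<d. P i j = \<psi> i * cnj (\<psi> j)" "unit_vector d \<psi>"
       "\<forall>i<d. \<forall>j<d. Q i j = \<phi> i * cnj (\<phi> j)" "unit_vector d \<phi>" for P Q \<psi> \<phi>
    using tr_prod_rho_product_state[OF that d] d
    by (simp add: less_eq_complex_def zero_le_divide_iff)
  show ?thesis
  proof
    assume L: "local_positive d (rho d \<eta> \<beta>)"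
    show "\<forall>\<psi> \<phi>. unit_vector d \<psi> \<longrightarrow> unit_vector d \<phi> \<longrightarrow>
       0 \<le> rho_form d \<eta> \<beta> (herm_overlap d \<psi> \<phi>) (bilin_overlap d \<psi> \<phi>)"
    proof (intro allI impI)
      fix \<psi> \<phi> assume u: "unit_vector d \<psi>" "unit_vector d \<phi>"
      let ?P = "\<lambda>i j. \<psi> i * cnj (\<psi> j)" and ?Q = "\<lambda>i j. \<phi> i * cnj (\<phi> j)"
      have "rank_one_proj d ?P" "rank_one_proj d ?Q"
        using u unfolding rank_one_proj_def unit_vector_def by blast+
      then have "0 \<le> tr_prod d (rho d \<eta> \<beta>) (tensor ?P ?Q)"
        using L unfolding local_positive_def by blast
      then show "0 \<le> rho_form d \<eta> \<beta> (herm_overlap d \<psi> \<phi>) (bilin_overlap d \<psi> \<phi>)"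
        using value_nonneg_iff[of ?P \<psi> ?Q \<phi>] u by simp
    qed
  next
    assume R: "\<forall>\<psi> \<phi>. unit_vector d \<psi> \<longrightarrow> unit_vector d \<phi> \<longrightarrow>
       0 \<le> rho_form d \<eta> \<beta> (herm_overlap d \<psi> \<phi>) (bilin_overlap d \<psi> \<phi>)"
    show "local_positive d (rho d \<eta> \<beta>)"
      unfolding local_positive_def
    proof (intro allI impI)
      fix PA PB assume "rank_one_proj d PA" "rank_one_proj d PB"
      then obtain \<psi> \<phi> where u: "unit_vector d \<psi>" "unit_vector d \<phi>"
        and "\<forall>i<d. \<forall>j<d. PA i j = \<psi> i * cnj (\<psi> j)" "\<forall>i<d. \<forall>j<d. PB i j = \<phi> i * cnj (\<phi> j)"
        unfolding rank_one_proj_def unit_vector_def by blast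
      then show "0 \<le> tr_prod d (rho d \<eta> \<beta>) (tensor PA PB)"
        using value_nonneg_iff R by blast
    qed
  qed
qed

lemma norm_sum_mult_le_half_norms:
  fixes u v :: "nat \<Rightarrow> complex"
  shows "cmod (\<Sum>a<d. u a * v a) \<le> ((\<Sum>a<d. (cmod (u a))\<^sup>2) + (\<Sum>a<d. (cmod (v a))\<^sup>2)) / 2"
proof -
  have "cmod (\<Sum>a<d. u a * v a) \<le> (\<Sum>a<d. cmod (u a * v a))"
    by (rule norm_sum)
  also have "\<dots> = (\<Sum>a<d. cmod (u a) * cmod (v a))"
    by (simp add: norm_mult)
  also have "\<dots> \<le> (\<Sum>a<d. ((cmod (u a))\<^sup>2 + (cmod (v a))\<^sup>2) / 2)"
  proof (rule sum_mono)
    fix a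
    have "0 \<le> (cmod (u a) - cmod (v a))\<^sup>2" by simp
    then show "cmod (u a) * cmod (v a) \<le> ((cmod (u a))\<^sup>2 + (cmod (v a))\<^sup>2) / 2"
      by (simp add: power2_eq_square algebra_simps)
  qed
  also have "\<dots> = ((\<Sum>a<d. (cmod (u a))\<^sup>2) + (\<Sum>a<d. (cmod (v a))\<^sup>2)) / 2"
    by (simp add: sum_divide_distrib[symmetric] sum.distrib)
  finally show ?thesis .
qed

lemma overlap_square_le_one:
  assumes "unit_vector d u" "unit_vector d v"
  shows "0 \<le> (cmod (\<Sum>a<d. u a * v a))\<^sup>2" "(cmod (\<Sum>a<d. u a * v a))\<^sup>2 \<le> 1"
proof -
  have "cmod (\<Sum>a<d. u a * v a) \<le> 1"
    using norm_sum_mult_le_half_norms[of u v d] assms by (simp add: unit_vector_def)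
  then show "(cmod (\<Sum>a<d. u a * v a))\<^sup>2 \<le> 1"
    by (intro power_le_one norm_ge_zero)
qed simp

lemma overlaps_in_unit_interval:
  assumes u\<psi>: "unit_vector d \<psi>" and u\<phi>: "unit_vector d \<phi>"
  shows "0 \<le> herm_overlap d \<psi> \<phi>" "herm_overlap d \<psi> \<phi> \<le> 1"
    and "0 \<le> bilin_overlap d \<psi> \<phi>" "bilin_overlap d \<psi> \<phi> \<le> 1"
proof -
  have "unit_vector d (\<lambda>a. cnj (\<psi> a))" using u\<psi> by (simp add: unit_vector_def)
  from overlap_square_le_one[OF this u\<phi>]
  show "0 \<le> herm_overlap d \<psi> \<phi>" "herm_overlap d \<psi> \<phi> \<le> 1"
    unfolding herm_overlap_def by simp_all
  from overlap_square_le_one[OF u\<psi> u\<phi>]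
  show "0 \<le> bilin_overlap d \<psi> \<phi>" "bilin_overlap d \<psi> \<phi> \<le> 1"
    unfolding bilin_overlap_def by simp_all
qed

text \<open>Witnesses for the corners, supported on the first two coordinates.\<close>
definition e0 :: "nat \<Rightarrow> complex" where "e0 i = (if i = 0 then 1 else 0)"
definition e1 :: "nat \<Rightarrow> complex" where "e1 i = (if i = 1 then 1 else 0)"
definition circ :: "nat \<Rightarrow> complex" where
  "circ i = (if i = 0 then 1 else if i = 1 then \<i> else 0) * complex_of_real (sqrt (1/2))"

lemma sum_supported_on_01:
  fixes d :: nat
  assumes "d \<ge> 2" and "\<And>i. i \<noteq> 0 \<Longrightarrow> i \<noteq> 1 \<Longrightarrow> g i = (0::'a::comm_monoid_add)"
  shows "(\<Sum>i<d. g i) = g 0 + g 1"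
proof -
  have "(\<Sum>i<d. g i) = (\<Sum>i\<in>{0,1}. g i)"
    using assms by (intro sum.mono_neutral_right) auto
  then show ?thesis by simp
qed

lemma sqrt_half_facts:
  "complex_of_real (sqrt (1/2)) * complex_of_real (sqrt (1/2)) = 1/2"
  "(cmod (complex_of_real (sqrt (1/2))))\<^sup>2 = 1/2"
  "cnj (complex_of_real (sqrt (1/2))) = complex_of_real (sqrt (1/2))"
  by (simp_all flip: of_real_mult add: power2_eq_square)

text \<open>The witnesses are unit vectors (this is where d \<ge> 2 is needed).\<close>
lemma corner_witnesses_unit:
  assumes "d \<ge> 2"
  shows "unit_vector d e0" "unit_vector d e1" "unit_vector d circ" "unit_vector d (cnj \<circ> circ)"
  using assms unfolding unit_vector_def
  by (subst sum_supported_on_01; auto simp: e0_def e1_def circ_def norm_mult sqrt_half_facts)+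

lemma corner_witnesses_overlaps:
  assumes "d \<ge> 2"
  shows "herm_overlap d e0 e1 = 0" "bilin_overlap d e0 e1 = 0"
    and "herm_overlap d e0 e0 = 1" "bilin_overlap d e0 e0 = 1"
    and "herm_overlap d circ circ = 1" "bilin_overlap d circ circ = 0"
    and "herm_overlap d circ (cnj \<circ> circ) = 0" "bilin_overlap d circ (cnj \<circ> circ) = 1"
  using assms unfolding herm_overlap_def bilin_overlap_def
  by (subst sum_supported_on_01; auto simp: e0_def e1_def circ_def sqrt_half_facts algebra_simps)+

text \<open>An affine function is the bilinear interpolation of its corner values, so it is
  nonnegative on [0,1]^2 as soon as it is nonnegative at the four corners.\<close>
lemma affine_nonneg_on_unit_square:
  fixes a b c x y :: real
  assumes corners: "0 \<le> c" "0 \<le> c + a" "0 \<le> c + b" "0 \<le> c + a + b"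
    and "0 \<le> x" "x \<le> 1" "0 \<le> y" "y \<le> 1"
  shows "0 \<le> c + a * x + b * y"
proof -
  have "c + a * x + b * y
      = (1-x)*(1-y) * c + x*(1-y) * (c + a) + (1-x)*y * (c + b) + x*y * (c + a + b)"
    by (simp add: algebra_simps)
  also have "0 \<le> \<dots>"
  proof -
    have weights: "0 \<le> (1-x)*(1-y)" "0 \<le> x*(1-y)" "0 \<le> (1-x)*y" "0 \<le> x*y"
      using assms by simp_all
    show ?thesis
      using mult_nonneg_nonneg[OF weights(1) corners(1)] mult_nonneg_nonneg[OF weights(2) corners(2)]
        mult_nonneg_nonneg[OF weights(3) corners(3)] mult_nonneg_nonneg[OF weights(4) corners(4)]
      by linarith
  qed
  finally show ?thesis .
qed

lemma rho_form_nonneg_on_unit_square: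
  assumes corners: "0 \<le> rho_form d \<eta> \<beta> 0 0 \<and> 0 \<le> rho_form d \<eta> \<beta> 1 0 \<and>
                    0 \<le> rho_form d \<eta> \<beta> 0 1 \<and> 0 \<le> rho_form d \<eta> \<beta> 1 1"
    and "0 \<le> x" "x \<le> 1" "0 \<le> y" "y \<le> 1"
  shows "0 \<le> rho_form d \<eta> \<beta> x y"
proof -
  have "0 \<le> (1 - \<eta> - \<beta>) + (real d * \<eta>) * x + (real d * \<beta>) * y"
    by (rule affine_nonneg_on_unit_square) (use assms in \<open>simp_all add: rho_form_def\<close>)
  then show ?thesis unfolding rho_form_def by (simp add: mult.assoc)
qed

lemma rho_form_corners_iff:
  assumes "d \<ge> 2"
  shows "(0 \<le> rho_form d \<eta> \<beta> 0 0 \<and> 0 \<le> rho_form d \<eta> \<beta> 1 0 \<and>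
          0 \<le> rho_form d \<eta> \<beta> 0 1 \<and> 0 \<le> rho_form d \<eta> \<beta> 1 1) \<longleftrightarrow>
    (- 1 / (real d - 1) \<le> \<eta> + \<beta> \<and> \<eta> + \<beta> \<le> 1 \<and>
     - (real d - 1) * \<eta> + \<beta> \<le> 1 \<and> \<eta> - (real d - 1) * \<beta> \<le> 1)"
proof -
  have "real d - 1 > 0" using assms by simp
  then have "- 1 / (real d - 1) \<le> \<eta> + \<beta> \<longleftrightarrow> - 1 \<le> (\<eta> + \<beta>) * (real d - 1)"
    by (rule pos_divide_le_eq)
  then show ?thesis unfolding rho_form_def by (auto simp: algebra_simps)
qed

theorem mainTheorem8:
  fixes d :: nat and \<eta> \<beta> :: real
  assumes "d \<ge> 2"
  shows "local_positive d (rho d \<eta> \<beta>) \<longleftrightarrow>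
    (- 1 / (real d - 1) \<le> \<eta> + \<beta> \<and> \<eta> + \<beta> \<le> 1 \<and>
     - (real d - 1) * \<eta> + \<beta> \<le> 1 \<and>
     \<eta> - (real d - 1) * \<beta> \<le> 1)"
proof -
  let ?G = "rho_form d \<eta> \<beta>"
  have "local_positive d (rho d \<eta> \<beta>) \<longleftrightarrow>
      (0 \<le> ?G 0 0 \<and> 0 \<le> ?G 1 0 \<and> 0 \<le> ?G 0 1 \<and> 0 \<le> ?G 1 1)"
  proof -
    have d: "d > 0" using assms by simp
    note witness_unit = corner_witnesses_unit[OF assms]
      and witness_overlap = corner_witnesses_overlaps[OF assms]
    have necessary: "0 \<le> ?G 0 0 \<and> 0 \<le> ?G 1 0 \<and> 0 \<le> ?G 0 1 \<and> 0 \<le> ?G 1 1"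
      if R: "\<forall>\<psi> \<phi>. unit_vector d \<psi> \<longrightarrow> unit_vector d \<phi> \<longrightarrow>
        0 \<le> ?G (herm_overlap d \<psi> \<phi>) (bilin_overlap d \<psi> \<phi>)"
      using R[rule_format, OF witness_unit(1) witness_unit(2)] R[rule_format, OF witness_unit(3) witness_unit(3)]
        R[rule_format, OF witness_unit(3) witness_unit(4)] R[rule_format, OF witness_unit(1) witness_unit(1)]
      unfolding witness_overlap by simp
    have sufficient: "0 \<le> ?G (herm_overlap d \<psi> \<phi>) (bilin_overlap d \<psi> \<phi>)"
      if corners: "0 \<le> ?G 0 0 \<and> 0 \<le> ?G 1 0 \<and> 0 \<le> ?G 0 1 \<and> 0 \<le> ?G 1 1"
        and unit: "unit_vector d \<psi>" "unit_vector d \<phi>" for \<psi> \<phi>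
      using overlaps_in_unit_interval[OF unit] by (intro rho_form_nonneg_on_unit_square[OF corners])
    show ?thesis
      unfolding local_positive_rho_iff[OF d]
      by (rule iffI, erule necessary, intro allI impI, erule (2) sufficient)
  qed
  then show ?thesis using rho_form_corners_iff[OF assms] by simp
qed

end
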